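(* For every $n\in\mathbb N$, let $\Sigma_{n,n}$ be the $n\times n$ matrix and $\Sigma_{n,n+1}$ the $n\times(n+1)$ matrix whose $(i,j)$ entry is $1$ if $j\in\{i,i+1\}$ and $0$ otherwise. Then \[\|\Sigma_{n,n}\|_\bullet=\|\Sigma_{n,n+1}\|_\bullet=\frac{2}{n+1}\cot\Big(\frac{\pi}{2(n+1)}\Big).\]
   Context: Fix $\mathbb F\in\{\mathbb R,\mathbb C\}$. For an $m\times n$ matrix $A$ with entries in $\mathbb F$, the Schur norm is $\|A\|_\bullet=\sup\{\|A\bullet X\|: X\in M_{m,n}(\mathbb F),\ \|X\|\le1\}$, where $A\bullet X=[a_{ij}x_{ij}]$ is the entrywise product and $\|\cdot\|$ is the operator norm $\ell^2_n\to\ell^2_m$. *)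

theory Defs
  imports Complex_Main
begin

text \<open>Matrices of varying size are represented as functions nat \<Rightarrow> nat \<Rightarrow> 'a,
  together with explicit dimensions m (rows) and n (columns); indices are 0-based,
  only entries with i < m and j < n are relevant. Vectors in F^n are nat \<Rightarrow> 'a
  (only the first n coordinates matter).\<close>

definition vec_norm :: "nat \<Rightarrow> (nat \<Rightarrow> 'a::real_normed_field) \<Rightarrow> real" where
  "vec_norm n x = sqrt (\<Sum>j<n. (norm (x j))\<^sup>2)"

definition mat_apply :: "nat \<Rightarrow> (nat \<Rightarrow> nat \<Rightarrow> 'a::real_normed_field) \<Rightarrow> (nat \<Rightarrow> 'a) \<Rightarrow> (nat \<Rightarrow> 'a)" where
  "mat_apply n A x = (\<lambda>i. \<Sum>j<n. A i j * x j)"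

definition op_norm :: "nat \<Rightarrow> nat \<Rightarrow> (nat \<Rightarrow> nat \<Rightarrow> 'a::real_normed_field) \<Rightarrow> real" where
  "op_norm m n A = Sup {vec_norm m (mat_apply n A x) | x. vec_norm n x \<le> 1}"

definition schur_prod :: "(nat \<Rightarrow> nat \<Rightarrow> 'a::real_normed_field) \<Rightarrow> (nat \<Rightarrow> nat \<Rightarrow> 'a) \<Rightarrow> (nat \<Rightarrow> nat \<Rightarrow> 'a)" where
  "schur_prod A X = (\<lambda>i j. A i j * X i j)"

definition schur_norm :: "nat \<Rightarrow> nat \<Rightarrow> (nat \<Rightarrow> nat \<Rightarrow> 'a::real_normed_field) \<Rightarrow> real" where
  "schur_norm m n A = Sup {op_norm m n (schur_prod A X) | X. op_norm m n X \<le> 1}"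

text \<open>Sigma: entry (i,j) is 1 iff j \<in> {i, i+1} (0-based; same pattern as 1-based).\<close>
definition Sigma_mat :: "nat \<Rightarrow> nat \<Rightarrow> 'a::real_normed_field" where
  "Sigma_mat i j = (if j = i \<or> j = i + 1 then 1 else 0)"

end

theory Submission
  imports Defs "HOL-Analysis.L2_Norm"
begin

text \<open>
  Write N = n + 1. For the upper bound, a discrete Fourier expansion over N frequencies gives
  Sigma(i,j) = sum_q a_q(i) b_q(j) with sum_q a_q(i)^2 = sum_q b_q(j)^2 = 2/N cot(pi/(2N)),
  and by Cauchy-Schwarz such a factorisation bounds the Schur multiplier norm by this common
  row bound.

  For the lower bound we exhibit a real contraction X and real vectors xi, eta with
  <xi, (Sigma o X) eta> = 2/N cot(pi/(2N)) |xi| |eta|. Up to unimodular row and column factors,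
  X is a complex isometry whose columns are Lagrange polynomials of degree N - 2 evaluated at
  the N-th roots of unity: a quadrature rule moves the weighted square norm of such polynomial
  values from the roots of z^N = 1 to those of z^N = -1, where the Lagrange property makes it
  diagonal. Since X is real, it serves over both fields.
\<close>

section \<open>Operator and Schur norms\<close>

lemma vec_norm_eq_L2_set: "vec_norm n x = L2_set (\<lambda>j. norm (x j)) {..<n}"
  unfolding vec_norm_def L2_set_def by simp

lemma vec_norm_nonneg: "0 \<le> vec_norm n x"
  unfolding vec_norm_def by (simp add: sum_nonneg)

lemma vec_norm_power2: "(vec_norm n x)\<^sup>2 = (\<Sum>j<n. (norm (x j))\<^sup>2)"
  unfolding vec_norm_def by (simp add: sum_nonneg)

lemma norm_le_vec_norm: "j < n \<Longrightarrow> norm (x j) \<le> vec_norm n x"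
  unfolding vec_norm_eq_L2_set by (rule member_le_L2_set) auto

lemma vec_norm_mono: "n \<le> n' \<Longrightarrow> vec_norm n x \<le> vec_norm n' x"
  unfolding vec_norm_def by (intro real_sqrt_le_mono sum_mono2) auto

lemma vec_norm_cong: "(\<And>j. j < n \<Longrightarrow> norm (x j) = norm (y j)) \<Longrightarrow> vec_norm n x = vec_norm n y"
  unfolding vec_norm_def by simp

lemma vec_norm_scale: "vec_norm n (\<lambda>j. x j * of_real c) = \<bar>c\<bar> * vec_norm n x"
  unfolding vec_norm_eq_L2_set by (simp add: norm_mult L2_set_right_distrib mult.commute)

lemma vec_norm_eq_0_iff: "vec_norm n x = 0 \<longleftrightarrow> (\<forall>j<n. x j = 0)"
  unfolding vec_norm_def by (auto simp: sum_nonneg_eq_0_iff)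

lemma mat_apply_of_real:
  "mat_apply n (\<lambda>i j. of_real (A i j)) (\<lambda>j. of_real (x j)) i = of_real (mat_apply n A x i)"
  unfolding mat_apply_def by simp

lemma bdd_above_op_norm_set:
  "bdd_above {vec_norm m (mat_apply n A x) | x. vec_norm n x \<le> 1}"
proof (rule bdd_aboveI)
  fix r assume "r \<in> {vec_norm m (mat_apply n A x) | x. vec_norm n x \<le> 1}"
  then obtain x where r: "r = vec_norm m (mat_apply n A x)" and x: "vec_norm n x \<le> 1" by auto
  have "r \<le> (\<Sum>i<m. norm (mat_apply n A x i))"
    unfolding r vec_norm_eq_L2_set by (rule L2_set_le_sum) auto
  also have "\<dots> \<le> (\<Sum>i<m. \<Sum>j<n. norm (A i j))"
  proof (intro sum_mono)
    fix i
    have "norm (mat_apply n A x i) \<le> (\<Sum>j<n. norm (A i j * x j))"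
      unfolding mat_apply_def by (rule norm_sum)
    also have "\<dots> \<le> (\<Sum>j<n. norm (A i j))"
    proof (intro sum_mono)
      fix j assume "j \<in> {..<n}"
      then have "norm (x j) \<le> 1" using norm_le_vec_norm[of j n x] x by simp
      then show "norm (A i j * x j) \<le> norm (A i j)" by (simp add: norm_mult mult_left_le)
    qed
    finally show "norm (mat_apply n A x i) \<le> (\<Sum>j<n. norm (A i j))" .
  qed
  finally show "r \<le> (\<Sum>i<m. \<Sum>j<n. norm (A i j))" .
qed

lemma vec_norm_mat_apply_le_op_norm:
  "vec_norm n x \<le> 1 \<Longrightarrow> vec_norm m (mat_apply n A x) \<le> op_norm m n A"
  unfolding op_norm_def by (rule cSup_upper) (auto intro: bdd_above_op_norm_set)

lemma op_norm_least:
  "(\<And>x. vec_norm n x \<le> 1 \<Longrightarrow> vec_norm m (mat_apply n A x) \<le> K) \<Longrightarrow> op_norm m n A \<le> K"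
  unfolding op_norm_def
  by (rule cSup_least) (auto intro!: exI[of _ "\<lambda>_. 0"] simp: vec_norm_def)

lemma op_norm_nonneg: "0 \<le> op_norm m n A"
  using vec_norm_mat_apply_le_op_norm[of n "\<lambda>_. 0" m A] vec_norm_nonneg[of m]
  by (simp add: vec_norm_def mat_apply_def)

lemma op_norm_zero: "op_norm m n (\<lambda>_ _. 0) = 0"
  using op_norm_nonneg by (intro antisym op_norm_least) (simp_all add: mat_apply_def vec_norm_def)

lemma vec_norm_mat_apply_le: "vec_norm m (mat_apply n A x) \<le> op_norm m n A * vec_norm n x"
proof (cases "vec_norm n x = 0")
  case True
  then have "mat_apply n A x = (\<lambda>_. 0)"
    unfolding mat_apply_def vec_norm_eq_0_iff by auto
  then show ?thesis using True by (simp add: vec_norm_def)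
next
  case False
  define r where "r = vec_norm n x"
  have r: "r > 0" using False vec_norm_nonneg[of n x] unfolding r_def by linarith
  have "vec_norm m (mat_apply n A x) / r = vec_norm m (mat_apply n A (\<lambda>j. x j * of_real (1 / r)))"
    using vec_norm_scale[of m "mat_apply n A x" "1 / r"] r
    by (simp add: mat_apply_def sum_distrib_right mult.assoc sum_divide_distrib)
  also have "\<dots> \<le> op_norm m n A"
    using r vec_norm_scale[of n x "1 / r"] unfolding r_def by (intro vec_norm_mat_apply_le_op_norm) simp
  finally show ?thesis using r unfolding r_def by (simp add: divide_le_eq mult.commute)
qed

lemma sum_mult_mat_apply_le:
  fixes A :: "nat \<Rightarrow> nat \<Rightarrow> real"
  shows "(\<Sum>i<m. xi i * mat_apply n A eta i) \<le> vec_norm m xi * op_norm m n A * vec_norm n eta"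
proof -
  have "(\<Sum>i<m. xi i * mat_apply n A eta i) \<le> (\<Sum>i<m. \<bar>xi i\<bar> * \<bar>mat_apply n A eta i\<bar>)"
    by (intro sum_mono) (simp add: abs_mult[symmetric])
  also have "\<dots> \<le> vec_norm m xi * vec_norm m (mat_apply n A eta)"
    unfolding vec_norm_def L2_set_def[symmetric] real_norm_def power2_abs by (rule L2_set_mult_ineq)
  also have "\<dots> \<le> vec_norm m xi * (op_norm m n A * vec_norm n eta)"
    by (intro mult_left_mono vec_norm_mat_apply_le vec_norm_nonneg)
  finally show ?thesis by (simp add: mult_ac)
qed

lemma op_norm_le_op_norm_of_real:
  "op_norm m n A \<le> op_norm m n (\<lambda>i j. of_real (A i j) :: 'a::real_normed_field)"
proof (rule op_norm_least)
  fix x :: "nat \<Rightarrow> real" assume "vec_norm n x \<le> 1"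
  then have "vec_norm n (\<lambda>j. of_real (x j) :: 'a) \<le> 1" unfolding vec_norm_def by simp
  then have "vec_norm m (mat_apply n (\<lambda>i j. of_real (A i j) :: 'a) (\<lambda>j. of_real (x j)))
      \<le> op_norm m n (\<lambda>i j. of_real (A i j) :: 'a)"
    by (rule vec_norm_mat_apply_le_op_norm)
  then show "vec_norm m (mat_apply n A x) \<le> op_norm m n (\<lambda>i j. of_real (A i j) :: 'a)"
    unfolding mat_apply_of_real by (simp add: vec_norm_def)
qed

lemma schur_norm_least:
  "(\<And>X. op_norm m n X \<le> 1 \<Longrightarrow> op_norm m n (schur_prod A X) \<le> K) \<Longrightarrow> schur_norm m n A \<le> K"
  unfolding schur_norm_def
  by (rule cSup_least) (auto intro!: exI[of _ "\<lambda>_ _. 0"] simp: op_norm_zero)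

text \<open>The bound K is only needed to make the supremum defining schur_norm one over a bounded set.\<close>
lemma op_norm_schur_prod_le_schur_norm:
  assumes "\<And>X. op_norm m n X \<le> 1 \<Longrightarrow> op_norm m n (schur_prod A X) \<le> K"
    and "op_norm m n X \<le> 1"
  shows "op_norm m n (schur_prod A X) \<le> schur_norm m n A"
  unfolding schur_norm_def
  by (rule cSup_upper) (use assms in \<open>auto intro!: bdd_aboveI\<close>)

lemma L2_set_L2_set_weighted_le:
  fixes a :: "'p \<Rightarrow> 'i \<Rightarrow> real"
  assumes "finite P" "finite I" and row: "\<And>i. i \<in> I \<Longrightarrow> (\<Sum>p\<in>P. (a p i)\<^sup>2) \<le> \<alpha>"
  shows "L2_set (\<lambda>p. L2_set (\<lambda>i. a p i * u i) I) P \<le> sqrt \<alpha> * L2_set u I"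
proof (cases "I = {}")
  case False
  then obtain i where "i \<in> I" by blast
  then have \<alpha>: "0 \<le> \<alpha>" using row[of i] by (meson order_trans sum_nonneg zero_le_power2)
  have "(L2_set (\<lambda>p. L2_set (\<lambda>i. a p i * u i) I) P)\<^sup>2 = (\<Sum>i\<in>I. (u i)\<^sup>2 * (\<Sum>p\<in>P. (a p i)\<^sup>2))"
    unfolding L2_set_def by (simp add: sum_nonneg sum.swap[of _ P] sum_distrib_left power_mult_distrib mult_ac)
  also have "\<dots> \<le> (\<Sum>i\<in>I. (u i)\<^sup>2 * \<alpha>)"
    by (intro sum_mono mult_left_mono row) auto
  also have "\<dots> = (sqrt \<alpha> * L2_set u I)\<^sup>2"
    using \<alpha> unfolding L2_set_def by (simp add: power_mult_distrib sum_nonneg sum_distrib_left mult.commute)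
  finally show ?thesis
    by (rule power2_le_imp_le) (simp add: \<alpha>)
qed (simp add: L2_set_def)

lemma power2_vec_norm_schur_prod_factorization_le:
  fixes A X :: "nat \<Rightarrow> nat \<Rightarrow> 'a::real_normed_field" and y :: "nat \<Rightarrow> 'a"
    and a b :: "'p \<Rightarrow> nat \<Rightarrow> real"
  assumes "finite P"
    and A: "\<And>i j. i < m \<Longrightarrow> j < n \<Longrightarrow> A i j = of_real (\<Sum>p\<in>P. a p i * b p j)"
  defines "w \<equiv> mat_apply n (schur_prod A X) y"
  shows "(vec_norm m w)\<^sup>2 \<le> op_norm m n X
    * (L2_set (\<lambda>p. L2_set (\<lambda>i. a p i * norm (w i)) {..<m}) P * L2_set (\<lambda>p. L2_set (\<lambda>j. b p j * norm (y j)) {..<n}) P)"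
proof -
  define z where "z = (\<lambda>p j. of_real (b p j) * y j)"
  define F where "F = (\<lambda>p. L2_set (\<lambda>i. a p i * norm (w i)) {..<m})"
  define G where "G = (\<lambda>p. L2_set (\<lambda>j. b p j * norm (y j)) {..<n})"
  have w: "w i = (\<Sum>p\<in>P. of_real (a p i) * mat_apply n X (z p) i)" if "i < m" for i
    unfolding w_def mat_apply_def schur_prod_def z_def
    by (simp add: A that sum_distrib_left sum_distrib_right sum.swap[of _ P] mult_ac)
  have z: "vec_norm n (z p) = G p" for p
    unfolding vec_norm_def G_def z_def L2_set_def by (simp add: norm_mult power_mult_distrib)
  have "(vec_norm m w)\<^sup>2 = (\<Sum>i<m. norm (w i) * norm (w i))"
    unfolding vec_norm_power2 by (simp add: power2_eq_square)
  also have "\<dots> \<le> (\<Sum>i<m. norm (w i) * (\<Sum>p\<in>P. \<bar>a p i\<bar> * norm (mat_apply n X (z p) i)))"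
  proof (intro sum_mono mult_left_mono norm_ge_zero)
    fix i assume "i \<in> {..<m}"
    then have "norm (w i) \<le> (\<Sum>p\<in>P. norm (of_real (a p i) * mat_apply n X (z p) i))"
      using w by (simp add: norm_sum)
    then show "norm (w i) \<le> (\<Sum>p\<in>P. \<bar>a p i\<bar> * norm (mat_apply n X (z p) i))"
      by (simp add: norm_mult)
  qed
  also have "\<dots> = (\<Sum>p\<in>P. \<Sum>i<m. \<bar>a p i * norm (w i)\<bar> * \<bar>norm (mat_apply n X (z p) i)\<bar>)"
    by (simp add: sum.swap[of _ P] sum_distrib_left abs_mult mult_ac)
  also have "\<dots> \<le> (\<Sum>p\<in>P. F p * vec_norm m (mat_apply n X (z p)))"
    unfolding F_def vec_norm_eq_L2_set by (intro sum_mono L2_set_mult_ineq)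
  also have "\<dots> \<le> (\<Sum>p\<in>P. F p * (op_norm m n X * G p))"
    unfolding F_def by (intro sum_mono mult_left_mono L2_set_nonneg) (metis z vec_norm_mat_apply_le)
  also have "\<dots> = op_norm m n X * (\<Sum>p\<in>P. \<bar>F p\<bar> * \<bar>G p\<bar>)"
    by (simp add: F_def G_def sum_distrib_left mult_ac)
  also have "\<dots> \<le> op_norm m n X * (L2_set F P * L2_set G P)"
    by (intro mult_left_mono op_norm_nonneg L2_set_mult_ineq)
  finally show ?thesis unfolding F_def G_def .
qed

lemma op_norm_schur_prod_factorization_le:
  fixes A X :: "nat \<Rightarrow> nat \<Rightarrow> 'a::real_normed_field" and a b :: "'p \<Rightarrow> nat \<Rightarrow> real"
  assumes "finite P"
    and A: "\<And>i j. i < m \<Longrightarrow> j < n \<Longrightarrow> A i j = of_real (\<Sum>p\<in>P. a p i * b p j)"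
    and a: "\<And>i. i < m \<Longrightarrow> (\<Sum>p\<in>P. (a p i)\<^sup>2) \<le> \<alpha>"
    and b: "\<And>j. j < n \<Longrightarrow> (\<Sum>p\<in>P. (b p j)\<^sup>2) \<le> \<beta>"
    and "0 \<le> \<alpha>" "0 \<le> \<beta>"
  shows "op_norm m n (schur_prod A X) \<le> sqrt \<alpha> * sqrt \<beta> * op_norm m n X"
proof (rule op_norm_least)
  fix y :: "nat \<Rightarrow> 'a" assume y: "vec_norm n y \<le> 1"
  define w where "w = mat_apply n (schur_prod A X) y"
  have "(vec_norm m w)\<^sup>2 \<le> op_norm m n X
    * (L2_set (\<lambda>p. L2_set (\<lambda>i. a p i * norm (w i)) {..<m}) P * L2_set (\<lambda>p. L2_set (\<lambda>j. b p j * norm (y j)) {..<n}) P)"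
    unfolding w_def by (rule power2_vec_norm_schur_prod_factorization_le[OF \<open>finite P\<close> A])
  also have "\<dots> \<le> op_norm m n X * ((sqrt \<alpha> * vec_norm m w) * (sqrt \<beta> * vec_norm n y))"
    unfolding vec_norm_eq_L2_set using \<open>finite P\<close>
    by (intro mult_left_mono op_norm_nonneg mult_mono L2_set_L2_set_weighted_le a b)
      (auto simp: \<open>0 \<le> \<alpha>\<close>)
  finally have "vec_norm m w * vec_norm m w \<le> vec_norm m w * (sqrt \<alpha> * sqrt \<beta> * op_norm m n X * vec_norm n y)"
    by (simp add: power2_eq_square mult_ac)
  then have "vec_norm m w \<le> sqrt \<alpha> * sqrt \<beta> * op_norm m n X * vec_norm n y"
    using vec_norm_nonneg[of m w] \<open>0 \<le> \<alpha>\<close> \<open>0 \<le> \<beta>\<close> op_norm_nonneg[of m n X] vec_norm_nonneg[of n y]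
    by (metis mult_le_cancel_left_pos mult_nonneg_nonneg order_le_less real_sqrt_ge_zero)
  also have "\<dots> \<le> sqrt \<alpha> * sqrt \<beta> * op_norm m n X"
    using y \<open>0 \<le> \<alpha>\<close> \<open>0 \<le> \<beta>\<close> op_norm_nonneg[of m n X] by (simp add: mult_left_le)
  finally show "vec_norm m (mat_apply n (schur_prod A X) y) \<le> sqrt \<alpha> * sqrt \<beta> * op_norm m n X"
    unfolding w_def .
qed

section \<open>Trigonometric sums over multiples of pi / N\<close>

definition psi :: "nat \<Rightarrow> real" where "psi N = pi / real N"

lemma cis_diff: "cis a - cis b = 2 * \<i> * complex_of_real (sin ((a - b) / 2)) * cis ((a + b) / 2)"
proof -
  have "sin ((b - a) / 2) = - sin ((a - b) / 2)"
    by (metis minus_diff_eq minus_divide_left sin_minus)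
  then have "cos a - cos b = - 2 * sin ((a - b) / 2) * sin ((a + b) / 2)"
    by (simp add: cos_diff_cos algebra_simps)
  moreover have "sin a - sin b = 2 * sin ((a - b) / 2) * cos ((a + b) / 2)"
    by (simp add: sin_diff_sin)
  ultimately show ?thesis by (simp add: complex_eq_iff)
qed

lemma cis_neq_cis: "sin ((a - b) / 2) \<noteq> 0 \<Longrightarrow> cis a \<noteq> cis b"
  using cis_diff[of a b] by auto

lemma sin_of_int_mult_psi_neq_0:
  assumes "0 < N" "s \<noteq> 0" "\<bar>s\<bar> < int N"
  shows "sin (of_int s * psi N) \<noteq> 0"
proof
  assume "sin (of_int s * psi N) = 0"
  then obtain i :: int where "of_int s * psi N = of_int i * pi" by (auto simp: sin_zero_iff_int2)
  then have "real_of_int s = of_int i * real N" using assms(1) by (simp add: psi_def field_simps)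
  then have "s = i * int N" by (metis of_int_eq_iff of_int_mult of_int_of_nat_eq)
  then show False using assms by (cases "i = 0") (auto simp: abs_mult)
qed

lemma sum_cis_psi:
  assumes N: "0 < N" and m: "\<bar>m\<bar> < int N"
  shows "(\<Sum>k<N. cis (2 * real k * psi N * of_int m + f)) = (if m = 0 then of_nat N * cis f else 0)"
proof (cases "m = 0")
  case False
  define x where "x = cis (2 * psi N * of_int m)"
  have x_pow: "cis (2 * real k * psi N * of_int m + f) = x ^ k * cis f" for k
    unfolding x_def DeMoivre by (simp add: cis_mult mult_ac add.commute)
  have "x ^ N = cis (2 * pi * of_int m)"
    unfolding x_def DeMoivre psi_def using N by (simp add: field_simps)
  then have "x ^ N = 1" by (simp add: cis_multiple_2pi)
  moreover have "x \<noteq> 1"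
    using cis_neq_cis[of "2 * psi N * of_int m" 0] sin_of_int_mult_psi_neq_0[OF N False m]
    by (simp add: x_def mult.commute)
  ultimately show ?thesis
    using False unfolding x_pow by (simp add: sum_distrib_right[symmetric] geometric_sum)
qed simp

lemma sum_cos_psi:
  assumes "0 < N" "\<bar>m\<bar> < int N"
  shows "(\<Sum>k<N. cos (2 * real k * psi N * of_int m + f)) = (if m = 0 then real N * cos f else 0)"
  using arg_cong[OF sum_cis_psi[OF assms, of f], of Re] by (simp add: Re_sum)

lemma sum_cos_psi_eq_0: "2 \<le> N \<Longrightarrow> (\<Sum>k<N. cos (2 * real k * psi N + f)) = 0"
  using sum_cos_psi[of N 1 f] by simp

lemma sin_mult_sum_sin:
  "2 * sin t * (\<Sum>p<N. sin (2 * real p * t + f)) = cos (f - t) - cos ((2 * real N - 1) * t + f)"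
proof (induction N)
  case (Suc N)
  have "2 * sin t * sin x = cos (x - t) - cos (x + t)" for x
    by (simp add: cos_add cos_diff)
  moreover have "(2 * real N * t + f) - t = (2 * real N - 1) * t + f"
    and "(2 * real N * t + f) + t = (2 * real (Suc N) - 1) * t + f"
    by (simp_all add: algebra_simps)
  ultimately have "2 * sin t * sin (2 * real N * t + f)
      = cos ((2 * real N - 1) * t + f) - cos ((2 * real (Suc N) - 1) * t + f)"
    by metis
  then show ?case using Suc by (simp add: distrib_left)
qed simp

lemma sum_sin_psi: "0 < N \<Longrightarrow> (\<Sum>p<N. sin (real p * psi N)) = cot (pi / (2 * real N))"
proof -
  assume N: "0 < N"
  define t where "t = pi / (2 * real N)"
  have "sin t > 0" using N unfolding t_def by (intro sin_gt_zero) (auto simp: field_simps)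
  have arg: "2 * real p * t + 0 = real p * psi N" for p unfolding t_def psi_def using N by simp
  have "2 * sin t * (\<Sum>p<N. sin (real p * psi N)) = cos (0 - t) - cos ((2 * real N - 1) * t + 0)"
    using sin_mult_sum_sin[where t = t and N = N and f = 0] unfolding arg .
  also have "(2 * real N - 1) * t + 0 = pi - t" unfolding t_def using N by (simp add: field_simps)
  finally have "sin t * (\<Sum>p<N. sin (real p * psi N)) = cos t" by simp
  then show ?thesis using \<open>sin t > 0\<close> unfolding cot_def t_def[symmetric] by (simp add: field_simps)
qed

lemma sum_sin_power2_psi: "2 \<le> N \<Longrightarrow> (\<Sum>k<N. (sin (real k * psi N))\<^sup>2) = real N / 2"
  using sum_cos_psi_eq_0[of N 0]
  by (simp add: power2_eq_square sin_times_sin sum_divide_distrib[symmetric] sum_subtractf algebra_simps)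

lemma sum_sin_mult_sin_psi:
  "2 \<le> N \<Longrightarrow> (\<Sum>k<N. sin (real k * psi N) * sin (real (Suc k) * psi N)) = real N * cos (psi N) / 2"
  using sum_cos_psi_eq_0[of N "psi N"]
  by (simp add: sin_times_sin sum_divide_distrib[symmetric] sum_subtractf algebra_simps)

section \<open>A factorisation of Sigma and the upper bound\<close>

definition sigma_bound :: "nat \<Rightarrow> real" where
  "sigma_bound N = 2 / real N * cot (pi / (2 * real N))"

definition fourier_amp :: "nat \<Rightarrow> nat \<Rightarrow> real" where
  "fourier_amp N p = sqrt (2 * sin (real p * psi N) / real N)"

definition row_factor :: "nat \<Rightarrow> nat \<times> bool \<Rightarrow> nat \<Rightarrow> real" where
  "row_factor N q i = (case q of
     (p, True) \<Rightarrow> fourier_amp N p * (-1) ^ i * sin ((2 * real i + 1) * real p * psi N)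
   | (p, False) \<Rightarrow> - fourier_amp N p * (-1) ^ i * cos ((2 * real i + 1) * real p * psi N))"

definition col_factor :: "nat \<Rightarrow> nat \<times> bool \<Rightarrow> nat \<Rightarrow> real" where
  "col_factor N q j = (case q of
     (p, True) \<Rightarrow> fourier_amp N p * (-1) ^ j * cos (2 * real j * real p * psi N)
   | (p, False) \<Rightarrow> fourier_amp N p * (-1) ^ j * sin (2 * real j * real p * psi N))"

lemma sum_lessThan_times_bool:
  "(\<Sum>q\<in>{..<N} \<times> (UNIV :: bool set). f q) = (\<Sum>p<N. f (p, True) + f (p, False))"
  by (simp add: sum.cartesian_product' UNIV_bool add.commute)

lemma sin_psi_nonneg: "p < N \<Longrightarrow> 0 \<le> sin (real p * psi N)"
  unfolding psi_def by (intro sin_ge_zero) (auto simp: field_simps)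

lemma fourier_amp_power2: "p < N \<Longrightarrow> (fourier_amp N p)\<^sup>2 = 2 / real N * sin (real p * psi N)"
  unfolding fourier_amp_def using sin_psi_nonneg[of p N] by simp

lemma sum_fourier_amp_power2: "(\<Sum>p<N. (fourier_amp N p)\<^sup>2) = sigma_bound N"
proof (cases "N = 0")
  case False
  have "(\<Sum>p<N. (fourier_amp N p)\<^sup>2) = 2 / real N * (\<Sum>p<N. sin (real p * psi N))"
    by (simp add: fourier_amp_power2 sum_distrib_left)
  then show ?thesis using False by (simp add: sum_sin_psi sigma_bound_def)
qed (simp add: sigma_bound_def)

lemma sum_row_factor_power2: "(\<Sum>q\<in>{..<N} \<times> UNIV. (row_factor N q i)\<^sup>2) = sigma_bound N"
  unfolding sum_lessThan_times_bool row_factor_def sum_fourier_amp_power2[symmetric]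
  by (intro sum.cong refl) (simp add: power_mult_distrib power_mult[symmetric] algebra_simps flip: distrib_left)

lemma sum_col_factor_power2: "(\<Sum>q\<in>{..<N} \<times> UNIV. (col_factor N q j)\<^sup>2) = sigma_bound N"
  unfolding sum_lessThan_times_bool col_factor_def sum_fourier_amp_power2[symmetric]
  by (intro sum.cong refl) (simp add: power_mult_distrib power_mult[symmetric] algebra_simps flip: distrib_left)

lemma row_col_factor_product:
  assumes "p < N"
  shows "row_factor N (p, True) i * col_factor N (p, True) j + row_factor N (p, False) i * col_factor N (p, False) j
    = (-1) ^ (i + j) / real N * (cos (2 * real p * psi N * of_int (int j - int i))
                                 - cos (2 * real p * psi N * of_int (int i - int j + 1)))"
proof -
  define A where "A = (2 * real i + 1) * real p * psi N"
  define B where "B = 2 * real j * real p * psi N"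
  have "row_factor N (p, True) i * col_factor N (p, True) j + row_factor N (p, False) i * col_factor N (p, False) j
      = (fourier_amp N p)\<^sup>2 * (-1) ^ (i + j) * (sin A * cos B - cos A * sin B)"
    unfolding row_factor_def col_factor_def A_def B_def by (simp add: power2_eq_square power_add algebra_simps)
  also have "\<dots> = (-1) ^ (i + j) / real N * (2 * (sin (real p * psi N) * sin (A - B)))"
    by (simp add: fourier_amp_power2[OF assms] sin_diff)
  also have "2 * (sin (real p * psi N) * sin (A - B))
      = cos (real p * psi N - (A - B)) - cos (real p * psi N + (A - B))"
    by (simp add: sin_times_sin)
  also have "real p * psi N - (A - B) = 2 * real p * psi N * of_int (int j - int i)"
    unfolding A_def B_def by (simp add: algebra_simps)
  also have "real p * psi N + (A - B) = 2 * real p * psi N * of_int (int i - int j + 1)"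
    unfolding A_def B_def by (simp add: algebra_simps)
  finally show ?thesis .
qed

text \<open>Summing over the frequencies p is a discrete Fourier inversion: the sum equals
  (-1)^(i+j) ([j = i] - [j = i + 1]).\<close>
lemma sum_row_col_factor:
  assumes "i < n" "j < Suc n"
  shows "(\<Sum>q\<in>{..<Suc n} \<times> UNIV. row_factor (Suc n) q i * col_factor (Suc n) q j) = Sigma_mat i j"
proof -
  have "(\<Sum>q\<in>{..<Suc n} \<times> UNIV. row_factor (Suc n) q i * col_factor (Suc n) q j)
      = (-1) ^ (i + j) / real (Suc n) * ((\<Sum>p<Suc n. cos (2 * real p * psi (Suc n) * of_int (int j - int i)))
          - (\<Sum>p<Suc n. cos (2 * real p * psi (Suc n) * of_int (int i - int j + 1))))"
    unfolding sum_lessThan_times_bool sum_subtractf[symmetric] sum_distrib_left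
    by (intro sum.cong refl row_col_factor_product) simp
  also have "\<dots> = (-1) ^ (i + j) / real (Suc n) * ((if j = i then real (Suc n) else 0)
          - (if j = i + 1 then real (Suc n) else 0))"
    using assms sum_cos_psi[where N = "Suc n" and m = "int j - int i" and f = 0]
      sum_cos_psi[where N = "Suc n" and m = "int i - int j + 1" and f = 0]
    by (simp del: sum.lessThan_Suc of_int_diff of_int_add)
  also have "\<dots> = Sigma_mat i j"
    by (auto simp: Sigma_mat_def power_add[symmetric] simp flip: mult_2)
  finally show ?thesis .
qed

lemma sigma_bound_nonneg: "0 \<le> sigma_bound N"
proof (cases "N = 0")
  case False
  then have "0 < pi / (2 * real N)" "pi / (2 * real N) \<le> pi / 2" by (auto simp: field_simps)
  then have "0 \<le> cos (pi / (2 * real N))" "0 < sin (pi / (2 * real N))"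
    by (auto intro!: cos_ge_zero sin_gt_zero simp: field_simps)
  then show ?thesis unfolding sigma_bound_def cot_def by simp
qed (simp add: sigma_bound_def)

lemma op_norm_schur_prod_Sigma_mat_le:
  assumes "nc \<le> Suc n"
  shows "op_norm n nc (schur_prod (Sigma_mat :: nat \<Rightarrow> nat \<Rightarrow> 'a::real_normed_field) X)
    \<le> sigma_bound (Suc n) * op_norm n nc X"
proof -
  have "op_norm n nc (schur_prod (Sigma_mat :: nat \<Rightarrow> nat \<Rightarrow> 'a) X)
      \<le> sqrt (sigma_bound (Suc n)) * sqrt (sigma_bound (Suc n)) * op_norm n nc X"
    using assms sigma_bound_nonneg
    by (intro op_norm_schur_prod_factorization_le[where P = "{..<Suc n} \<times> UNIV"
          and a = "row_factor (Suc n)" and b = "col_factor (Suc n)"])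
      (auto simp: sum_row_col_factor sum_row_factor_power2 sum_col_factor_power2 Sigma_mat_def)
  then show ?thesis using sigma_bound_nonneg by simp
qed

section \<open>A quadrature rule on the roots of z^N = 1 and z^N = -1\<close>

text \<open>zeta N k, for k < N, are the N-th roots of unity and rho N l, for l < N, the roots
  of z^N = -1.\<close>
definition zeta :: "nat \<Rightarrow> nat \<Rightarrow> complex" where
  "zeta N k = cis (2 * real k * psi N)"

definition rho :: "nat \<Rightarrow> nat \<Rightarrow> complex" where
  "rho N l = cis ((2 * real l - 1) * psi N)"

definition zeta_weight :: "nat \<Rightarrow> nat \<Rightarrow> real" where
  "zeta_weight N k = sin (real k * psi N) * sin ((real k + 1/2) * psi N)"

definition rho_weight :: "nat \<Rightarrow> nat \<Rightarrow> real" where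
  "rho_weight N l = sin (real l * psi N) * sin ((real l - 1/2) * psi N)"

lemma zeta_weight_eq: "zeta_weight N k = (cos (psi N / 2) - cos (2 * real k * psi N + psi N / 2)) / 2"
  unfolding zeta_weight_def sin_times_sin by (simp add: algebra_simps)

lemma rho_weight_eq: "rho_weight N l = (cos (psi N / 2) - cos (2 * real l * psi N - psi N / 2)) / 2"
  unfolding rho_weight_def sin_times_sin by (simp add: algebra_simps)

lemma sin_mult_psi_pos: "0 < x \<Longrightarrow> x < real N \<Longrightarrow> 0 < sin (x * psi N)"
  unfolding psi_def by (intro sin_gt_zero) (auto simp: field_simps)

lemma zeta_weight_0 [simp]: "zeta_weight N 0 = 0"
  unfolding zeta_weight_def by simp

lemma rho_weight_0 [simp]: "rho_weight N 0 = 0"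
  unfolding rho_weight_def by simp

lemma zeta_weight_nonneg: "k < N \<Longrightarrow> 0 \<le> zeta_weight N k"
  unfolding zeta_weight_def using sin_psi_nonneg[of k N] sin_mult_psi_pos[of "real k + 1/2" N]
  by simp

lemma rho_weight_pos: "0 < l \<Longrightarrow> l < N \<Longrightarrow> 0 < rho_weight N l"
  unfolding rho_weight_def using sin_mult_psi_pos[of "real l" N] sin_mult_psi_pos[of "real l - 1/2" N]
  by simp

lemma sum_zeta_weight: "2 \<le> N \<Longrightarrow> (\<Sum>k<N. zeta_weight N k) = real N * cos (psi N / 2) / 2"
  unfolding zeta_weight_eq using sum_cos_psi_eq_0[of N "psi N / 2"]
  by (simp add: sum_divide_distrib[symmetric] sum_subtractf)

lemma sum_rho_weight: "2 \<le> N \<Longrightarrow> (\<Sum>l<N. rho_weight N l) = real N * cos (psi N / 2) / 2"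
  unfolding rho_weight_eq using sum_cos_psi_eq_0[of N "- (psi N / 2)"]
  by (simp add: sum_divide_distrib[symmetric] sum_subtractf)

lemma sum_cos_weight_cis_psi:
  assumes N: "2 \<le> N" and m: "\<bar>m\<bar> \<le> int N - 2"
  shows "(\<Sum>k<N. of_real ((c - cos (2 * real k * psi N + a)) / 2) * cis (2 * real k * psi N * of_int m + b))
    = of_nat N / 4 * (2 * of_real c * (if m = 0 then cis b else 0)
                      - (if m = -1 then cis (a + b) else 0) - (if m = 1 then cis (b - a) else 0))"
proof -
  have cis_prod: "of_real ((c - cos x) / 2) * cis y = (2 * of_real c * cis y - cis (x + y) - cis (y - x)) / 4" for x y
    by (simp add: complex_eq_iff cos_add cos_diff sin_add sin_diff field_simps)
  have e: "of_real ((c - cos (2 * real k * psi N + a)) / 2) * cis (2 * real k * psi N * of_int m + b)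
      = (2 * of_real c * cis (2 * real k * psi N * of_int m + b)
         - cis (2 * real k * psi N * of_int (m + 1) + (a + b))
         - cis (2 * real k * psi N * of_int (m - 1) + (b - a))) / 4" for k
  proof -
    have "(2 * real k * psi N + a) + (2 * real k * psi N * of_int m + b) = 2 * real k * psi N * of_int (m + 1) + (a + b)"
      and "(2 * real k * psi N * of_int m + b) - (2 * real k * psi N + a) = 2 * real k * psi N * of_int (m - 1) + (b - a)"
      by (simp_all add: algebra_simps)
    then show ?thesis using cis_prod by metis
  qed
  have bounds: "0 < N" "\<bar>m + 1\<bar> < int N" "\<bar>m - 1\<bar> < int N" "\<bar>m\<bar> < int N" using N m by auto
  have "(\<Sum>k<N. of_real ((c - cos (2 * real k * psi N + a)) / 2) * cis (2 * real k * psi N * of_int m + b))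
      = (2 * of_real c * (\<Sum>k<N. cis (2 * real k * psi N * of_int m + b))
         - (\<Sum>k<N. cis (2 * real k * psi N * of_int (m + 1) + (a + b)))
         - (\<Sum>k<N. cis (2 * real k * psi N * of_int (m - 1) + (b - a)))) / 4"
    by (simp only: e sum_divide_distrib[symmetric] sum_subtractf sum_distrib_left[symmetric])
  also have "\<dots> = of_nat N / 4 * (2 * of_real c * (if m = 0 then cis b else 0)
                      - (if m = -1 then cis (a + b) else 0) - (if m = 1 then cis (b - a) else 0))"
    by (simp only: sum_cis_psi bounds) (auto simp: field_simps)
  finally show ?thesis .
qed

lemma zeta_rho_quadrature:
  assumes N: "2 \<le> N" and m: "\<bar>m\<bar> \<le> int N - 2"
  shows "(\<Sum>k<N. of_real (zeta_weight N k) * cis (2 * real k * psi N * of_int m))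
       = (\<Sum>l<N. of_real (rho_weight N l) * cis ((2 * real l - 1) * psi N * of_int m))"
proof -
  define c where "c = cos (psi N / 2)"
  have "(\<Sum>k<N. of_real (zeta_weight N k) * cis (2 * real k * psi N * of_int m))
      = (\<Sum>k<N. of_real ((c - cos (2 * real k * psi N + psi N / 2)) / 2) * cis (2 * real k * psi N * of_int m + 0))"
    unfolding zeta_weight_eq c_def by simp
  also have "\<dots> = of_nat N / 4 * (2 * of_real c * (if m = 0 then cis 0 else 0)
      - (if m = -1 then cis (psi N / 2 + 0) else 0) - (if m = 1 then cis (0 - psi N / 2) else 0))"
    by (rule sum_cos_weight_cis_psi[OF N m])
  also have "\<dots> = of_nat N / 4 * (2 * of_real c * (if m = 0 then cis (- psi N * of_int m) else 0)
      - (if m = -1 then cis (- (psi N / 2) + - psi N * of_int m) else 0)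
      - (if m = 1 then cis (- psi N * of_int m - - (psi N / 2)) else 0))"
    by auto
  also have "\<dots> = (\<Sum>l<N. of_real ((c - cos (2 * real l * psi N + - (psi N / 2))) / 2)
      * cis (2 * real l * psi N * of_int m + - psi N * of_int m))"
    by (rule sum_cos_weight_cis_psi[OF N m, symmetric])
  also have "\<dots> = (\<Sum>l<N. of_real (rho_weight N l) * cis ((2 * real l - 1) * psi N * of_int m))"
    unfolding rho_weight_eq c_def by (simp add: algebra_simps)
  finally show ?thesis .
qed

lemma cmod_power2_poly:
  "complex_of_real ((cmod (\<Sum>j<d. c j * z ^ j))\<^sup>2)
    = (\<Sum>a<d. \<Sum>b<d. c a * cnj (c b) * (z ^ a * cnj z ^ b))"
  unfolding complex_norm_square cnj_sum sum_product by (simp add: mult_ac)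

lemma sum_weighted_cmod_poly_eq:
  fixes u :: "'k \<Rightarrow> real" and v :: "'l \<Rightarrow> real" and x :: "'k \<Rightarrow> complex" and y :: "'l \<Rightarrow> complex"
  assumes moments: "\<And>a b. a < d \<Longrightarrow> b < d \<Longrightarrow>
      (\<Sum>k\<in>K. of_real (u k) * (x k ^ a * cnj (x k) ^ b)) = (\<Sum>l\<in>L. of_real (v l) * (y l ^ a * cnj (y l) ^ b))"
  shows "(\<Sum>k\<in>K. u k * (cmod (\<Sum>j<d. c j * x k ^ j))\<^sup>2) = (\<Sum>l\<in>L. v l * (cmod (\<Sum>j<d. c j * y l ^ j))\<^sup>2)"
proof -
  have "complex_of_real (\<Sum>k\<in>K. u k * (cmod (\<Sum>j<d. c j * x k ^ j))\<^sup>2)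
      = (\<Sum>a<d. \<Sum>b<d. c a * cnj (c b) * (\<Sum>k\<in>K. of_real (u k) * (x k ^ a * cnj (x k) ^ b)))"
    unfolding of_real_sum of_real_mult cmod_power2_poly
    by (simp add: sum_distrib_left sum_distrib_right sum.swap[of _ K] mult_ac)
  also have "\<dots> = (\<Sum>a<d. \<Sum>b<d. c a * cnj (c b) * (\<Sum>l\<in>L. of_real (v l) * (y l ^ a * cnj (y l) ^ b)))"
    using moments by simp
  also have "\<dots> = complex_of_real (\<Sum>l\<in>L. v l * (cmod (\<Sum>j<d. c j * y l ^ j))\<^sup>2)"
    unfolding of_real_sum of_real_mult cmod_power2_poly
    by (simp add: sum_distrib_left sum_distrib_right sum.swap[of _ L] mult_ac)
  finally show ?thesis by (simp only: of_real_eq_iff)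
qed

lemma cis_power_cnj: "cis t ^ a * cnj (cis t) ^ b = cis (t * of_int (int a - int b))"
  by (simp add: DeMoivre cis_cnj cis_mult algebra_simps)

lemma zeta_rho_quadrature_poly:
  assumes "2 \<le> N"
  shows "(\<Sum>k<N. zeta_weight N k * (cmod (\<Sum>j<N-1. c j * zeta N k ^ j))\<^sup>2)
       = (\<Sum>l<N. rho_weight N l * (cmod (\<Sum>j<N-1. c j * rho N l ^ j))\<^sup>2)"
  unfolding zeta_def rho_def
proof (intro sum_weighted_cmod_poly_eq)
  fix a b assume "a < N - 1" "b < N - 1"
  then show "(\<Sum>k<N. of_real (zeta_weight N k) * (cis (2 * real k * psi N) ^ a * cnj (cis (2 * real k * psi N)) ^ b))
      = (\<Sum>l<N. of_real (rho_weight N l) * (cis ((2 * real l - 1) * psi N) ^ a * cnj (cis ((2 * real l - 1) * psi N)) ^ b))"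
    unfolding cis_power_cnj using assms by (intro zeta_rho_quadrature) auto
qed

section \<open>An isometry built from Lagrange polynomials\<close>

lemma zeta_power_N: "zeta N k ^ N = 1"
proof (cases "N = 0")
  case False
  then have "real N * (2 * real k * psi N) = 2 * pi * real k" unfolding psi_def by (simp add: field_simps)
  then have "zeta N k ^ N = cis (2 * pi * real k)" unfolding zeta_def DeMoivre by (rule arg_cong)
  then show ?thesis by (simp add: cis_multiple_2pi)
qed simp

lemma rho_power_N: "0 < N \<Longrightarrow> rho N l ^ N = -1"
proof -
  assume N: "0 < N"
  then have "real N * ((2 * real l - 1) * psi N) = 2 * pi * real l + - pi"
    unfolding psi_def by (simp add: field_simps)
  then have "rho N l ^ N = cis (2 * pi * real l) * cis (- pi)"
    unfolding rho_def DeMoivre by (metis cis_mult)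
  then show ?thesis by (simp add: cis_multiple_2pi complex_eq_iff)
qed

lemma rho_neq_0: "rho N l \<noteq> 0"
  unfolding rho_def by simp

lemma zeta_neq_rho: "0 < N \<Longrightarrow> zeta N k \<noteq> rho N l"
  using zeta_power_N[of N k] rho_power_N[of N l] by auto

lemma rho_neq_rho:
  assumes "l < N" "l' < N" "l \<noteq> l'"
  shows "rho N l \<noteq> rho N l'"
  unfolding rho_def
proof (rule cis_neq_cis)
  have "((2 * real l - 1) * psi N - (2 * real l' - 1) * psi N) / 2 = of_int (int l - int l') * psi N"
    by (simp add: field_simps)
  moreover have "sin (of_int (int l - int l') * psi N) \<noteq> 0"
    using assms by (intro sin_of_int_mult_psi_neq_0) auto
  ultimately show "sin (((2 * real l - 1) * psi N - (2 * real l' - 1) * psi N) / 2) \<noteq> 0"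
    by simp
qed

lemma zeta_minus_rho:
  "zeta N k - rho N l = 2 * \<i> * of_real (sin ((real k - real l + 1/2) * psi N)) * cis ((real k + real l - 1/2) * psi N)"
proof -
  have "(2 * real k * psi N - (2 * real l - 1) * psi N) / 2 = (real k - real l + 1/2) * psi N"
    and "(2 * real k * psi N + (2 * real l - 1) * psi N) / 2 = (real k + real l - 1/2) * psi N"
    by (simp_all add: field_simps)
  then show ?thesis unfolding zeta_def rho_def cis_diff by simp
qed

lemma rho_minus_rho_0: "rho N l - rho N 0 = 2 * \<i> * of_real (sin (real l * psi N)) * cis ((real l - 1) * psi N)"
proof -
  have "((2 * real l - 1) * psi N - (2 * real 0 - 1) * psi N) / 2 = real l * psi N"
    and "((2 * real l - 1) * psi N + (2 * real 0 - 1) * psi N) / 2 = (real l - 1) * psi N"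
    by (simp_all add: field_simps)
  then show ?thesis unfolding rho_def cis_diff by simp
qed

definition geom_div :: "nat \<Rightarrow> complex \<Rightarrow> complex \<Rightarrow> complex" where
  "geom_div N r z = (\<Sum>j<N. z ^ j / r ^ Suc j)"

lemma geom_div_eq:
  assumes "r ^ N = -1" "z \<noteq> r"
  shows "geom_div N r z = - (z ^ N + 1) / (z - r)"
proof -
  have "r \<noteq> 0" using assms(1) by (cases N) auto
  then have "(z - r) * geom_div N r z = (\<Sum>j<N. z ^ Suc j / r ^ Suc j - z ^ j / r ^ j)"
    unfolding geom_div_def sum_distrib_left by (intro sum.cong refl) (simp add: field_simps)
  also have "\<dots> = z ^ N / r ^ N - 1"
    by (subst sum_lessThan_telescope) simp
  also have "\<dots> = - (z ^ N + 1)"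
    using assms(1) by simp
  finally show ?thesis using assms(2) by (simp add: field_simps)
qed

lemma geom_div_self: "r \<noteq> 0 \<Longrightarrow> geom_div N r r = of_nat N / r"
  unfolding geom_div_def by simp

text \<open>For 0 < l < N this is the polynomial (z^N + 1) / ((z - rho_0) (z - rho_l)) of degree N - 2,
  which vanishes at all rho_l' except rho_0 and rho_l; the difference quotient makes the degree visible.\<close>
definition lagrange_poly :: "nat \<Rightarrow> nat \<Rightarrow> complex \<Rightarrow> complex" where
  "lagrange_poly N l z = (geom_div N (rho N 0) z - geom_div N (rho N l) z) / (rho N l - rho N 0)"

lemma lagrange_poly_degree:
  assumes "0 < N"
  shows "\<exists>c. \<forall>z. lagrange_poly N l z = (\<Sum>j<N-1. c j * z ^ j)"
proof -
  define c where "c j = (1 / rho N 0 ^ Suc j - 1 / rho N l ^ Suc j) / (rho N l - rho N 0)" for j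
  have "c (N - 1) = 0"
    unfolding c_def using assms rho_power_N[OF assms, of 0] rho_power_N[OF assms, of l] by simp
  moreover have "lagrange_poly N l z = (\<Sum>j<Suc (N-1). c j * z ^ j)" for z
  proof -
    have "lagrange_poly N l z = (\<Sum>j<N. c j * z ^ j)"
      unfolding lagrange_poly_def geom_div_def c_def
      by (simp add: sum_subtractf[symmetric] sum_divide_distrib field_simps)
    then show ?thesis using assms by simp
  qed
  ultimately show ?thesis by auto
qed

lemma lagrange_poly_zeta:
  assumes "0 < l" "l < N"
  shows "lagrange_poly N l (zeta N k) = 2 / ((zeta N k - rho N 0) * (zeta N k - rho N l))"
proof -
  have N: "0 < N" using assms by simp
  have "zeta N k - rho N 0 \<noteq> 0" "zeta N k - rho N l \<noteq> 0" "rho N l - rho N 0 \<noteq> 0"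
    using zeta_neq_rho[OF N] rho_neq_rho[of l N 0] assms by auto
  then show ?thesis
    unfolding lagrange_poly_def using zeta_neq_rho[OF N]
    by (simp add: geom_div_eq rho_power_N[OF N] zeta_power_N divide_simps)
qed

lemma lagrange_poly_rho:
  assumes "0 < l" "l < N" "l' < N" "l' \<noteq> 0" "l' \<noteq> l"
  shows "lagrange_poly N l (rho N l') = 0"
  using assms rho_neq_rho[of l' N 0] rho_neq_rho[of l' N l]
  unfolding lagrange_poly_def by (simp add: geom_div_eq rho_power_N)

lemma lagrange_poly_rho_self:
  assumes "0 < l" "l < N"
  shows "lagrange_poly N l (rho N l) = - of_nat N / (rho N l * (rho N l - rho N 0))"
proof -
  have "rho N l - rho N 0 \<noteq> 0" using rho_neq_rho[of l N 0] assms by simp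
  then show ?thesis
    using assms rho_neq_rho[of l N 0] rho_neq_0[of N l]
    unfolding lagrange_poly_def by (simp add: geom_div_eq geom_div_self rho_power_N field_simps)
qed

definition lagrange_scale :: "nat \<Rightarrow> nat \<Rightarrow> complex" where
  "lagrange_scale N l = 1 / (of_real (sqrt (rho_weight N l)) * lagrange_poly N l (rho N l))"

definition isometry_mat :: "nat \<Rightarrow> nat \<Rightarrow> nat \<Rightarrow> complex" where
  "isometry_mat N i j = of_real (sqrt (zeta_weight N (Suc i))) * lagrange_scale N (Suc j)
     * lagrange_poly N (Suc j) (zeta N (Suc i))"

lemma rho_weight_cmod_lagrange_scale:
  assumes "0 < l" "l < N"
  shows "rho_weight N l * (cmod (lagrange_scale N l * lagrange_poly N l (rho N l)))\<^sup>2 = 1"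
proof -
  have "lagrange_poly N l (rho N l) \<noteq> 0"
    using lagrange_poly_rho_self[OF assms] rho_neq_rho[of l N 0] rho_neq_0[of N l] assms by simp
  then show ?thesis
    using rho_weight_pos[OF assms]
    by (simp add: lagrange_scale_def norm_divide norm_mult power_divide)
qed

text \<open>The columns evaluate polynomials of degree N - 2 at the zeta_k, so the quadrature rule
  turns the squared norm of the image into a sum over the rho_l, where the Lagrange property
  leaves a single term per coordinate.\<close>
lemma vec_norm_isometry_mat: "vec_norm n (mat_apply n (isometry_mat (Suc n)) y) = vec_norm n y"
proof (cases "n = 0")
  case False
  define N where "N = Suc n"
  have N: "2 \<le> N" "0 < N" using False unfolding N_def by auto
  obtain c where c: "\<And>l z. lagrange_poly N l z = (\<Sum>t<N-1. c l t * z ^ t)"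
    using lagrange_poly_degree[OF N(2)] by metis
  define g where "g z = (\<Sum>j<n. y j * lagrange_scale N (Suc j) * lagrange_poly N (Suc j) z)" for z
  have g_poly: "g z = (\<Sum>t<N-1. (\<Sum>j<n. y j * lagrange_scale N (Suc j) * c (Suc j) t) * z ^ t)" for z
    unfolding g_def c by (simp add: sum_distrib_left sum_distrib_right mult_ac sum.swap[of _ "{..<n}"])
  have g_rho: "g (rho N (Suc l)) = y l * lagrange_scale N (Suc l) * lagrange_poly N (Suc l) (rho N (Suc l))"
    if "l < n" for l
    unfolding g_def using that N_def lagrange_poly_rho[of "Suc _" N "Suc l"]
    by (subst sum.remove[of _ l]) (auto intro!: sum.neutral)
  have "mat_apply n (isometry_mat N) y i = of_real (sqrt (zeta_weight N (Suc i))) * g (zeta N (Suc i))" for i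
    unfolding mat_apply_def isometry_mat_def g_def by (simp add: sum_distrib_left mult_ac)
  then have "(vec_norm n (mat_apply n (isometry_mat N) y))\<^sup>2
      = (\<Sum>i<n. zeta_weight N (Suc i) * (cmod (g (zeta N (Suc i))))\<^sup>2)"
    unfolding vec_norm_power2 using zeta_weight_nonneg N_def
    by (intro sum.cong refl) (simp add: norm_mult power_mult_distrib)
  also have "\<dots> = (\<Sum>k<N. zeta_weight N k * (cmod (g (zeta N k)))\<^sup>2)"
    unfolding N_def sum.lessThan_Suc_shift by simp
  also have "\<dots> = (\<Sum>l<N. rho_weight N l * (cmod (g (rho N l)))\<^sup>2)"
    unfolding g_poly by (rule zeta_rho_quadrature_poly[OF N(1)])
  also have "\<dots> = (\<Sum>l<n. rho_weight N (Suc l) * (cmod (g (rho N (Suc l))))\<^sup>2)"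
    unfolding N_def sum.lessThan_Suc_shift by simp
  also have "\<dots> = (\<Sum>l<n. (cmod (y l))\<^sup>2)"
  proof (intro sum.cong refl)
    fix l assume "l \<in> {..<n}"
    moreover have "0 < Suc l" by simp
    moreover from \<open>l \<in> {..<n}\<close> have "Suc l < N" unfolding N_def by simp
    ultimately show "rho_weight N (Suc l) * (cmod (g (rho N (Suc l))))\<^sup>2 = (cmod (y l))\<^sup>2"
      using rho_weight_cmod_lagrange_scale[of "Suc l" N] g_rho[of l]
      by (simp add: norm_mult power_mult_distrib mult_ac)
  qed
  finally show ?thesis
    unfolding N_def vec_norm_power2[symmetric] using vec_norm_nonneg by (metis power2_eq_iff_nonneg)
qed (simp add: vec_norm_def)

section \<open>The extremal contraction and the lower bound\<close>

text \<open>The entries of isometry_mat N after multiplying row k by -i zeta_k and column l by the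
  conjugate of rho_l, which makes them real.\<close>
definition extremal_entry :: "nat \<Rightarrow> nat \<Rightarrow> nat \<Rightarrow> real" where
  "extremal_entry N k l = sqrt (zeta_weight N k) * sin (real l * psi N)
     / (real N * sqrt (rho_weight N l) * sin ((real k + 1/2) * psi N) * sin ((real k - real l + 1/2) * psi N))"

definition extremal_mat :: "nat \<Rightarrow> nat \<Rightarrow> nat \<Rightarrow> real" where
  "extremal_mat N i j = (if i < N - 1 \<and> j < N - 1 then extremal_entry N (Suc i) (Suc j) else 0)"

lemma of_real_extremal_entry:
  assumes k: "k < N" and l: "0 < l" "l < N"
  shows "complex_of_real (extremal_entry N k l)
    = of_real (sqrt (zeta_weight N k)) * lagrange_scale N l * lagrange_poly N l (zeta N k)
      * (- \<i> * zeta N k) * cnj (rho N l)"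
proof -
  have N: "0 < N" using l by simp
  define r where "r = rho N l"
  define S1 where "S1 = sin (real l * psi N)"
  define S2 where "S2 = sin ((real k + 1/2) * psi N)"
  define S3 where "S3 = sin ((real k - real l + 1/2) * psi N)"
  define e1 where "e1 = cis ((real l - 1) * psi N)"
  define e2 where "e2 = cis ((real k - 1/2) * psi N)"
  define e3 where "e3 = cis ((real k + real l - 1/2) * psi N)"
  define V where "V = sqrt (rho_weight N l)"
  define W where "W = sqrt (zeta_weight N k)"
  have D1: "r - rho N 0 = 2 * \<i> * of_real S1 * e1"
    unfolding r_def S1_def e1_def by (rule rho_minus_rho_0)
  have D2: "zeta N k - rho N 0 = 2 * \<i> * of_real S2 * e2"
    using zeta_minus_rho[of N k 0] unfolding S2_def e2_def by simp
  have D3: "zeta N k - r = 2 * \<i> * of_real S3 * e3"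
    unfolding r_def S3_def e3_def by (rule zeta_minus_rho)
  have nz: "r \<noteq> 0" "V \<noteq> 0" "e2 \<noteq> 0" "e3 \<noteq> 0"
    using rho_neq_0 rho_weight_pos[OF l] unfolding r_def V_def e2_def e3_def by auto
  have nz': "r - rho N 0 \<noteq> 0" "S2 \<noteq> 0" "S3 \<noteq> 0"
    using rho_neq_rho[of l N 0] zeta_neq_rho[OF N, of k 0] zeta_neq_rho[OF N, of k l] l D2 D3
    unfolding r_def by auto
  have scale: "lagrange_scale N l = - (r * (r - rho N 0)) / (of_nat N * of_real V)"
    using nz nz' N unfolding lagrange_scale_def lagrange_poly_rho_self[OF l] r_def V_def
    by (simp add: field_simps)
  have poly: "lagrange_poly N l (zeta N k) = 2 / ((zeta N k - rho N 0) * (zeta N k - r))"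
    unfolding r_def by (rule lagrange_poly_zeta[OF l])
  have "of_real W * lagrange_scale N l * lagrange_poly N l (zeta N k) * (- \<i> * zeta N k) * cnj r
      = of_real W * (- (r * (2 * \<i> * of_real S1 * e1)) / (of_nat N * of_real V))
        * (2 / ((2 * \<i> * of_real S2 * e2) * (2 * \<i> * of_real S3 * e3))) * (- \<i> * zeta N k) * cnj r"
    unfolding scale poly D1 D2 D3 ..
  also have "\<dots> = of_real (W * S1 / (real N * V * S2 * S3)) * ((r * cnj r) * (e1 * zeta N k) / (e2 * e3))"
    using nz nz' N by (simp add: field_simps)
  also have "(r * cnj r) * (e1 * zeta N k) / (e2 * e3) = 1"
    using nz unfolding r_def rho_def e1_def e2_def e3_def zeta_def
    by (simp add: cis_cnj cis_mult algebra_simps)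
  finally show ?thesis
    unfolding extremal_entry_def W_def V_def S1_def S2_def S3_def r_def by simp
qed

lemma op_norm_extremal_mat_complex:
  assumes "n \<le> nc"
  shows "op_norm n nc (\<lambda>i j. complex_of_real (extremal_mat (Suc n) i j)) \<le> 1"
proof (rule op_norm_least)
  fix y :: "nat \<Rightarrow> complex" assume y: "vec_norm nc y \<le> 1"
  define row where "row i = - \<i> * zeta (Suc n) (Suc i)" for i
  define col where "col j = cnj (rho (Suc n) (Suc j))" for j
  have "mat_apply nc (\<lambda>i j. complex_of_real (extremal_mat (Suc n) i j)) y i
      = row i * mat_apply n (isometry_mat (Suc n)) (\<lambda>j. col j * y j) i" if "i < n" for i
  proof -
    have "mat_apply nc (\<lambda>i j. complex_of_real (extremal_mat (Suc n) i j)) y i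
        = (\<Sum>j<n. complex_of_real (extremal_entry (Suc n) (Suc i) (Suc j)) * y j)"
      unfolding mat_apply_def extremal_mat_def using assms that
      by (intro sum.mono_neutral_cong_right) auto
    also have "\<dots> = row i * mat_apply n (isometry_mat (Suc n)) (\<lambda>j. col j * y j) i"
      unfolding mat_apply_def sum_distrib_left isometry_mat_def row_def col_def using that
      by (intro sum.cong refl) (simp add: of_real_extremal_entry mult_ac)
    finally show ?thesis .
  qed
  then have "vec_norm n (mat_apply nc (\<lambda>i j. complex_of_real (extremal_mat (Suc n) i j)) y)
      = vec_norm n (mat_apply n (isometry_mat (Suc n)) (\<lambda>j. col j * y j))"
    by (intro vec_norm_cong) (simp add: row_def zeta_def norm_mult)
  also have "\<dots> = vec_norm n (\<lambda>j. col j * y j)" by (rule vec_norm_isometry_mat)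
  also have "\<dots> = vec_norm n y" by (intro vec_norm_cong) (simp add: col_def rho_def norm_mult)
  also have "\<dots> \<le> 1" using vec_norm_mono[OF assms, of y] y by simp
  finally show "vec_norm n (mat_apply nc (\<lambda>i j. complex_of_real (extremal_mat (Suc n) i j)) y) \<le> 1" .
qed

lemma op_norm_extremal_mat_real: "n \<le> nc \<Longrightarrow> op_norm n nc (extremal_mat (Suc n)) \<le> 1"
  using op_norm_le_op_norm_of_real[of n nc "extremal_mat (Suc n)", where 'a = complex]
    op_norm_extremal_mat_complex by (meson order_trans)

definition extremal_row_vec :: "nat \<Rightarrow> nat \<Rightarrow> real" where
  "extremal_row_vec N i = (-1) ^ i * sqrt (zeta_weight N (Suc i))"

definition extremal_col_vec :: "nat \<Rightarrow> nat \<Rightarrow> real" where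
  "extremal_col_vec N j = (if j < N - 1 then (-1) ^ j * sqrt (rho_weight N (Suc j)) else 0)"

lemma extremal_entry_weighted:
  assumes "k < N" "0 < l" "l < N"
  shows "sqrt (zeta_weight N k) * extremal_entry N k l * sqrt (rho_weight N l)
    = sin (real k * psi N) * sin (real l * psi N) / (real N * sin ((real k - real l + 1/2) * psi N))"
proof -
  have "0 < sin ((real k + 1/2) * psi N)" using assms by (intro sin_mult_psi_pos) auto
  have "0 < rho_weight N l" using rho_weight_pos assms by simp
  then have "sqrt (zeta_weight N k) * extremal_entry N k l * sqrt (rho_weight N l)
      = (sqrt (zeta_weight N k))\<^sup>2 * sin (real l * psi N)
        / (real N * sin ((real k + 1/2) * psi N) * sin ((real k - real l + 1/2) * psi N))"
    unfolding extremal_entry_def by (simp add: field_simps power2_eq_square)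
  also have "(sqrt (zeta_weight N k))\<^sup>2 = sin (real k * psi N) * sin ((real k + 1/2) * psi N)"
    using zeta_weight_nonneg[OF assms(1)] unfolding zeta_weight_def by simp
  finally show ?thesis
    using \<open>0 < sin ((real k + 1/2) * psi N)\<close> by (simp add: field_simps)
qed

lemma sum_if_eq_or_Suc:
  assumes "i < nc"
  shows "(\<Sum>j<nc. if j = i \<or> j = Suc i then f j else 0) = f i + (if Suc i < nc then f (Suc i) else (0::'a::comm_monoid_add))"
proof -
  have "(\<Sum>j<nc. if j = i \<or> j = Suc i then f j else 0) = (\<Sum>j<nc. (if j = i then f j else 0) + (if j = Suc i then f j else 0))"
    by (intro sum.cong) auto
  then show ?thesis using assms by (simp add: sum.distrib)
qed

lemma extremal_row_vec_mult_mat_apply: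
  assumes "i < n" "n \<le> nc" "nc \<le> Suc n"
  shows "extremal_row_vec (Suc n) i * mat_apply nc (schur_prod Sigma_mat (extremal_mat (Suc n))) (extremal_col_vec (Suc n)) i
    = ((sin (real (Suc i) * psi (Suc n)))\<^sup>2 + sin (real (Suc i) * psi (Suc n)) * sin (real (Suc (Suc i)) * psi (Suc n)))
      / (real (Suc n) * sin (psi (Suc n) / 2))"
proof -
  define N where "N = Suc n"
  define E where "E j = extremal_row_vec N i * (extremal_mat N i j * extremal_col_vec N j)" for j
  have "extremal_row_vec N i * mat_apply nc (schur_prod Sigma_mat (extremal_mat N)) (extremal_col_vec N) i
      = (\<Sum>j<nc. if j = i \<or> j = Suc i then E j else 0)"
    unfolding mat_apply_def schur_prod_def sum_distrib_left E_def Sigma_mat_def by (intro sum.cong) auto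
  also have "\<dots> = E i + (if Suc i < nc then E (Suc i) else 0)"
    using assms by (intro sum_if_eq_or_Suc) simp
  also have "\<dots> = ((sin (real (Suc i) * psi N))\<^sup>2 + sin (real (Suc i) * psi N) * sin (real (Suc (Suc i)) * psi N))
      / (real N * sin (psi N / 2))"
  proof -
    have "E i = (sin (real (Suc i) * psi N))\<^sup>2 / (real N * sin (psi N / 2))"
      using assms extremal_entry_weighted[of "Suc i" N "Suc i"]
      unfolding E_def extremal_row_vec_def extremal_col_vec_def extremal_mat_def N_def
      by (simp add: power2_eq_square mult_ac)
    moreover have "E (Suc i) = sin (real (Suc i) * psi N) * sin (real (Suc (Suc i)) * psi N) / (real N * sin (psi N / 2))"
      if "Suc i < n"
    proof -
      have "(real (Suc i) - real (Suc (Suc i)) + 1/2) * psi N = - (psi N / 2)" by (simp add: algebra_simps)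
      then show ?thesis
        using that extremal_entry_weighted[of "Suc i" N "Suc (Suc i)"]
        unfolding E_def extremal_row_vec_def extremal_col_vec_def extremal_mat_def N_def
        by (simp add: mult_ac)
    qed
    moreover have "E (Suc i) = 0" and "sin (real (Suc (Suc i)) * psi N) = 0" if "\<not> Suc i < n"
    proof -
      have "Suc i = n" using that assms by simp
      then show "E (Suc i) = 0" and "sin (real (Suc (Suc i)) * psi N) = 0"
        unfolding E_def extremal_mat_def N_def psi_def by auto
    qed
    ultimately show ?thesis using assms by (cases "Suc i < n") (auto simp: add_divide_distrib)
  qed
  finally show ?thesis unfolding N_def .
qed

lemma extremal_vecs_pairing:
  assumes "0 < n" "n \<le> nc" "nc \<le> Suc n"
  shows "(\<Sum>i<n. extremal_row_vec (Suc n) i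
      * mat_apply nc (schur_prod Sigma_mat (extremal_mat (Suc n))) (extremal_col_vec (Suc n)) i)
    = (cos (psi (Suc n) / 2))\<^sup>2 / sin (psi (Suc n) / 2)"
proof -
  define N where "N = Suc n"
  have N: "2 \<le> N" using assms unfolding N_def by simp
  have "(\<Sum>i<n. extremal_row_vec N i * mat_apply nc (schur_prod Sigma_mat (extremal_mat N)) (extremal_col_vec N) i)
      = ((\<Sum>k<N. (sin (real k * psi N))\<^sup>2) + (\<Sum>k<N. sin (real k * psi N) * sin (real (Suc k) * psi N)))
        / (real N * sin (psi N / 2))"
    using assms unfolding N_def
    by (simp add: extremal_row_vec_mult_mat_apply sum.lessThan_Suc_shift sum.distrib sum_divide_distrib[symmetric]
        del: sum.lessThan_Suc)
  also have "\<dots> = (real N / 2 + real N * cos (psi N) / 2) / (real N * sin (psi N / 2))"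
    unfolding sum_sin_power2_psi[OF N] sum_sin_mult_sin_psi[OF N] ..
  also have "cos (psi N) = 2 * (cos (psi N / 2))\<^sup>2 - 1"
    using cos_double_cos[of "psi N / 2"] by simp
  also have "(real N / 2 + real N * (2 * (cos (psi N / 2))\<^sup>2 - 1) / 2) / (real N * sin (psi N / 2))
      = (cos (psi N / 2))\<^sup>2 / sin (psi N / 2)"
    using N by (simp add: field_simps)
  finally show ?thesis unfolding N_def .
qed

lemma vec_norm_extremal_row_vec: "0 < n \<Longrightarrow> vec_norm n (extremal_row_vec (Suc n)) = sqrt (real (Suc n) * cos (psi (Suc n) / 2) / 2)"
  unfolding vec_norm_def extremal_row_vec_def
  using zeta_weight_nonneg[of "Suc _" "Suc n"] sum_zeta_weight[of "Suc n"]
  by (simp add: power_mult_distrib power_mult[symmetric] sum.lessThan_Suc_shift del: sum.lessThan_Suc)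

lemma vec_norm_extremal_col_vec:
  assumes "0 < n" "n \<le> nc"
  shows "vec_norm nc (extremal_col_vec (Suc n)) = sqrt (real (Suc n) * cos (psi (Suc n) / 2) / 2)"
proof -
  have "vec_norm nc (extremal_col_vec (Suc n)) = vec_norm n (extremal_col_vec (Suc n))"
    unfolding vec_norm_def using assms
    by (intro arg_cong[where f = sqrt] sum.mono_neutral_right) (auto simp: extremal_col_vec_def)
  also have "\<dots> = sqrt (\<Sum>l<Suc n. rho_weight (Suc n) l)"
    unfolding vec_norm_def extremal_col_vec_def using rho_weight_pos[of "Suc _" "Suc n"]
    by (simp add: power_mult_distrib power_mult[symmetric] sum.lessThan_Suc_shift less_imp_le del: sum.lessThan_Suc)
  finally show ?thesis using sum_rho_weight[of "Suc n"] assms by simp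
qed

lemma sigma_bound_le_op_norm_extremal:
  assumes "n \<le> nc" "nc \<le> Suc n"
  shows "sigma_bound (Suc n) \<le> op_norm n nc (schur_prod Sigma_mat (extremal_mat (Suc n)))"
proof (cases "n = 0")
  case False
  define N where "N = Suc n"
  define c where "c = cos (psi N / 2)"
  define s where "s = sin (psi N / 2)"
  have "0 < psi N / 2" "psi N / 2 < pi / 2" unfolding N_def psi_def using False by (auto simp: field_simps)
  then have c: "0 < c" and s: "0 < s" unfolding c_def s_def
    by (auto intro!: cos_gt_zero sin_gt_zero)
  define op where "op = op_norm n nc (schur_prod Sigma_mat (extremal_mat N))"
  have "c\<^sup>2 / s \<le> (real N * c / 2) * op"
    using sum_mult_mat_apply_le[where m = n and xi = "extremal_row_vec N" and n = nc
        and A = "schur_prod Sigma_mat (extremal_mat N)" and eta = "extremal_col_vec N"]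
      c False assms
    unfolding N_def c_def s_def op_def
    by (simp add: extremal_vecs_pairing vec_norm_extremal_row_vec vec_norm_extremal_col_vec mult_ac)
  moreover have "0 < real N * c / 2" using c unfolding N_def by simp
  ultimately have "(c\<^sup>2 / s) / (real N * c / 2) \<le> op"
    by (metis pos_divide_le_eq mult.commute)
  moreover have "sigma_bound N = (c\<^sup>2 / s) / (real N * c / 2)"
    unfolding sigma_bound_def cot_def c_def s_def psi_def using c by (simp add: field_simps power2_eq_square)
  ultimately show ?thesis unfolding N_def op_def by simp
qed (simp add: sigma_bound_def cot_def op_norm_nonneg)

lemma schur_prod_Sigma_mat_of_real:
  "schur_prod Sigma_mat (\<lambda>i j. of_real (X i j)) = (\<lambda>i j. of_real (schur_prod Sigma_mat X i j) :: 'a::real_normed_field)"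
  unfolding schur_prod_def Sigma_mat_def by (auto simp: fun_eq_iff)

lemma schur_norm_Sigma_mat:
  assumes "n \<le> nc" "nc \<le> Suc n"
    and contraction: "op_norm n nc (\<lambda>i j. of_real (extremal_mat (Suc n) i j) :: 'a::real_normed_field) \<le> 1"
  shows "schur_norm n nc (Sigma_mat :: nat \<Rightarrow> nat \<Rightarrow> 'a) = sigma_bound (Suc n)"
proof (rule antisym)
  have bound: "op_norm n nc (schur_prod Sigma_mat X) \<le> sigma_bound (Suc n)"
    if "op_norm n nc X \<le> 1" for X :: "nat \<Rightarrow> nat \<Rightarrow> 'a"
    using op_norm_schur_prod_Sigma_mat_le[OF assms(2), of X] that sigma_bound_nonneg
    by (meson mult_left_le order_trans)
  then show "schur_norm n nc (Sigma_mat :: nat \<Rightarrow> nat \<Rightarrow> 'a) \<le> sigma_bound (Suc n)"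
    by (rule schur_norm_least)
  have "sigma_bound (Suc n) \<le> op_norm n nc (schur_prod Sigma_mat (extremal_mat (Suc n)))"
    by (rule sigma_bound_le_op_norm_extremal[OF assms(1,2)])
  also have "\<dots> \<le> op_norm n nc (schur_prod Sigma_mat (\<lambda>i j. of_real (extremal_mat (Suc n) i j) :: 'a))"
    unfolding schur_prod_Sigma_mat_of_real by (rule op_norm_le_op_norm_of_real)
  also have "\<dots> \<le> schur_norm n nc (Sigma_mat :: nat \<Rightarrow> nat \<Rightarrow> 'a)"
    by (rule op_norm_schur_prod_le_schur_norm[OF bound contraction])
  finally show "sigma_bound (Suc n) \<le> schur_norm n nc (Sigma_mat :: nat \<Rightarrow> nat \<Rightarrow> 'a)" .
qed

theorem theorem4p2:
  fixes n :: nat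
  shows "schur_norm n n (Sigma_mat :: nat \<Rightarrow> nat \<Rightarrow> real) = 2 / (n + 1) * cot (pi / (2 * (n + 1)))
       \<and> schur_norm n (n + 1) (Sigma_mat :: nat \<Rightarrow> nat \<Rightarrow> real) = 2 / (n + 1) * cot (pi / (2 * (n + 1)))
       \<and> schur_norm n n (Sigma_mat :: nat \<Rightarrow> nat \<Rightarrow> complex) = 2 / (n + 1) * cot (pi / (2 * (n + 1)))
       \<and> schur_norm n (n + 1) (Sigma_mat :: nat \<Rightarrow> nat \<Rightarrow> complex) = 2 / (n + 1) * cot (pi / (2 * (n + 1)))"
proof -
  have bound_eq: "sigma_bound (Suc n) = 2 / (n + 1) * cot (pi / (2 * (n + 1)))"
    unfolding sigma_bound_def by simp
  have "schur_norm n nc (Sigma_mat :: nat \<Rightarrow> nat \<Rightarrow> real) = sigma_bound (Suc n)"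
    if "n \<le> nc" "nc \<le> Suc n" for nc
    using that op_norm_extremal_mat_real[OF that(1)] by (intro schur_norm_Sigma_mat) simp_all
  moreover have "schur_norm n nc (Sigma_mat :: nat \<Rightarrow> nat \<Rightarrow> complex) = sigma_bound (Suc n)"
    if "n \<le> nc" "nc \<le> Suc n" for nc
    using that op_norm_extremal_mat_complex[OF that(1)] by (rule schur_norm_Sigma_mat)
  ultimately show ?thesis unfolding bound_eq by simp
qed

end
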